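(* Let $X_1,X_2,\dots$ be a sequence of non-negative random variables converging in distribution to a random variable $X$ with $\mathbf{E} X=\infty$. For each $n$, let $X_{n,1},\dots,X_{n,n}$ be iid copies of $X_n$. Then there is a positive nonrandom sequence $\{\phi_n\}$ with $\phi_n\to+\infty$ such that $$\mathbf{P}\bigl(X_{n,1}+\cdots+X_{n,n}>\phi_n n\bigr)=1-o(1)\quad\text{as } n\to\infty.$$ *)

theory Defs
  imports "HOL-Probability.Probability"
begin

end

theory Submission
  imports Defs "HOL-Real_Asymp.Real_Asymp"
begin

text \<open>
  Truncate at a level \<open>M\<close>: the bounded variables \<open>clip M X\<^sub>n\<close> have means converging, by weak
  convergence, to \<open>E (clip M X)\<close>, and these tend to \<open>E X = \<infinity>\<close> as \<open>M \<rightarrow> \<infinity>\<close>. Hence for every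
  constant \<open>c\<close> the truncated mean eventually exceeds \<open>c\<close>, and Hoeffding's inequality for the
  truncated summands, which lie below the original ones, shows that the probability of
  \<open>(\<Sum>i<n. Z n i) > c n\<close> tends to \<open>1\<close>. Letting \<open>c = \<phi>\<^sub>n\<close> grow slowly enough (a diagonal
  argument) yields the theorem.
\<close>

definition clip :: "real \<Rightarrow> real \<Rightarrow> real" where
  "clip M x = max 0 (min x M)"

lemma isCont_clip: "isCont (clip M) x"
  unfolding clip_def by (intro continuous_intros)

lemma borel_measurable_clip[measurable]: "clip M \<in> borel_measurable borel"
  unfolding clip_def by measurable

lemma clip_nonneg: "0 \<le> clip M x"
  unfolding clip_def by simp

lemma clip_zero: "clip 0 = (\<lambda>_. 0)"
  unfolding clip_def by (simp add: fun_eq_iff)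

lemma clip_le: "0 \<le> M \<Longrightarrow> clip M x \<le> M"
  unfolding clip_def by auto

lemma clip_le_self: "0 \<le> x \<Longrightarrow> clip M x \<le> x"
  unfolding clip_def by simp

lemma incseq_clip_ennreal: "incseq (\<lambda>k::nat. ennreal (clip (real k) x))"
  by (auto simp: incseq_def clip_def intro!: ennreal_leI)

lemma SUP_clip_ennreal: "(SUP k::nat. ennreal (clip (real k) x)) = ennreal x"
proof (rule LIMSEQ_unique[OF LIMSEQ_SUP])
  show "incseq (\<lambda>k::nat. ennreal (clip (real k) x))"
    by (rule incseq_clip_ennreal)
  obtain N :: nat where "x \<le> real N"
    using real_arch_simple by blast
  then have "\<forall>\<^sub>F k in sequentially. ennreal (clip (real k) x) = ennreal x"
    by (auto simp: eventually_sequentially clip_def intro!: exI[of _ N])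
  then show "(\<lambda>k::nat. ennreal (clip (real k) x)) \<longlonglongrightarrow> ennreal x"
    by (rule tendsto_eventually)
qed

lemma integral_clip_unbounded:
  fixes D :: "real measure"
  assumes "finite_measure D" and sets_D: "sets D = sets borel"
    and infinite_mean: "(\<integral>\<^sup>+ x. ennreal x \<partial>D) = \<infinity>"
  shows "\<exists>M>0. c < (\<integral>x. clip M x \<partial>D)"
proof -
  interpret finite_measure D by fact
  have clip_meas[measurable]: "clip M \<in> borel_measurable D" for M
    by (simp add: measurable_cong_sets[OF sets_D refl])
  have "(SUP k::nat. \<integral>\<^sup>+ x. ennreal (clip (real k) x) \<partial>D) = (\<integral>\<^sup>+ x. (SUP k::nat. ennreal (clip (real k) x)) \<partial>D)"
    by (rule nn_integral_monotone_convergence_SUP[symmetric])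
       (use incseq_clip_ennreal in \<open>auto simp: incseq_def le_fun_def\<close>)
  also have "\<dots> = \<infinity>"
    using infinite_mean by (simp add: SUP_clip_ennreal)
  finally have sup: "(SUP k::nat. \<integral>\<^sup>+ x. ennreal (clip (real k) x) \<partial>D) = \<infinity>" .
  have "ennreal c < (SUP k::nat. \<integral>\<^sup>+ x. ennreal (clip (real k) x) \<partial>D)"
    unfolding sup by simp
  then obtain k :: nat where "ennreal c < \<integral>\<^sup>+ x. ennreal (clip (real k) x) \<partial>D"
    unfolding less_SUP_iff by blast
  also have "\<dots> = ennreal (\<integral>x. clip (real k) x \<partial>D)"
    by (intro nn_integral_eq_integral integrable_const_bound[where B="real k"])
       (auto simp: clip_le clip_nonneg)
  finally have k: "max c 0 < (\<integral>x. clip (real k) x \<partial>D)"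
    by (cases "0 \<le> c") (auto simp: ennreal_less_iff ennreal_neg)
  then have "k \<noteq> 0"
    by (cases k) (simp_all add: clip_zero)
  with k show ?thesis
    by (intro exI[of _ "real k"]) auto
qed

lemma prob_sum_clip_le_exp:
  fixes \<Omega> :: "'a measure" and Z :: "nat \<Rightarrow> 'a \<Rightarrow> real" and D :: "real measure"
  assumes "prob_space \<Omega>"
    and indep: "prob_space.indep_vars \<Omega> (\<lambda>_. borel) Z {..<n}"
    and distr_Z: "\<And>i. i < n \<Longrightarrow> distr \<Omega> borel (Z i) = D"
    and n: "n > 0" and M: "M > 0" and mean: "c + \<delta> \<le> (\<integral>x. clip M x \<partial>D)" and \<delta>: "\<delta> \<ge> 0"
  shows "measure \<Omega> {\<omega> \<in> space \<Omega>. (\<Sum>i<n. clip M (Z i \<omega>)) \<le> c * real n}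
           \<le> exp (-2 * real n * \<delta>^2 / M^2)"
proof -
  interpret prob_space \<Omega> by fact
  have [measurable]: "Z i \<in> borel_measurable \<Omega>" if "i < n" for i
    using indep that unfolding indep_vars_def by auto
  define a where "a = (\<integral>x. clip M x \<partial>D)"
  have expectation_clip: "expectation (\<lambda>\<omega>. clip M (Z i \<omega>)) = a" if "i < n" for i
    using that distr_Z[OF that] integral_distr[of "Z i" \<Omega> borel "clip M"] by (simp add: a_def)
  interpret Hoeffding_ineq \<Omega> "{..<n}" "\<lambda>i \<omega>. clip M (Z i \<omega>)" "\<lambda>_. 0" "\<lambda>_. M" "real n * a"
  proof unfold_locales
    show "indep_vars (\<lambda>_. borel) (\<lambda>i \<omega>. clip M (Z i \<omega>)) {..<n}"
      by (rule indep_vars_compose2[OF indep]) auto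
    show "AE \<omega> in \<Omega>. clip M (Z i \<omega>) \<in> {0..M}" for i
      using M by (simp add: clip_nonneg clip_le)
    show "real n * a \<equiv> \<Sum>i<n. expectation (\<lambda>\<omega>. clip M (Z i \<omega>))"
      using expectation_clip by simp
  qed auto
  define \<epsilon> where "\<epsilon> = real n * (a - c)"
  have "real n * \<delta> \<le> \<epsilon>"
    using mean unfolding \<epsilon>_def a_def by (intro mult_left_mono) auto
  moreover have "0 \<le> real n * \<delta>"
    using \<delta> by simp
  ultimately have \<epsilon>: "0 \<le> \<epsilon>" "(real n * \<delta>)^2 \<le> \<epsilon>^2"
    by (auto intro: power_mono)
  have "measure \<Omega> {\<omega> \<in> space \<Omega>. (\<Sum>i<n. clip M (Z i \<omega>)) \<le> c * real n}
      = prob {\<omega> \<in> space \<Omega>. (\<Sum>i<n. clip M (Z i \<omega>)) \<le> real n * a - \<epsilon>}"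
    by (simp add: \<epsilon>_def algebra_simps)
  also have "\<dots> \<le> exp (-2 * \<epsilon>^2 / (\<Sum>i<n. (M - 0)^2))"
    by (rule Hoeffding_ineq_le) (use \<epsilon> n M in auto)
  also have "\<dots> \<le> exp (-2 * (real n * \<delta>)^2 / (real n * M^2))"
    using \<epsilon> n by (simp add: divide_right_mono)
  also have "\<dots> = exp (-2 * real n * \<delta>^2 / M^2)"
    using n by (simp add: power2_eq_square)
  finally show ?thesis .
qed

lemma prob_sum_gt_linear_ge:
  fixes \<Omega> :: "'a measure" and Z :: "nat \<Rightarrow> 'a \<Rightarrow> real" and D :: "real measure"
  assumes \<Omega>: "prob_space \<Omega>"
    and indep: "prob_space.indep_vars \<Omega> (\<lambda>_. borel) Z {..<n}"
    and distr_Z: "\<And>i. i < n \<Longrightarrow> distr \<Omega> borel (Z i) = D"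
    and nonneg: "AE x in D. 0 \<le> x"
    and M: "M > 0" and mean: "c + \<delta> \<le> (\<integral>x. clip M x \<partial>D)" and \<delta>: "\<delta> \<ge> 0"
  shows "1 - exp (-2 * real n * \<delta>^2 / M^2)
           \<le> measure \<Omega> {\<omega> \<in> space \<Omega>. c * real n < (\<Sum>i<n. Z i \<omega>)}"
proof (cases "n = 0")
  case True
  then show ?thesis by simp
next
  case False
  interpret prob_space \<Omega> by fact
  have [measurable]: "Z i \<in> borel_measurable \<Omega>" if "i < n" for i
    using indep that unfolding indep_vars_def by auto
  have Z_nonneg: "AE \<omega> in \<Omega>. \<forall>i\<in>{..<n}. 0 \<le> Z i \<omega>"
  proof (rule AE_finite_allI)
    fix i assume "i \<in> {..<n}"
    then show "AE \<omega> in \<Omega>. 0 \<le> Z i \<omega>"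
      using nonneg distr_Z[of i] by (auto simp: AE_distr_iff)
  qed simp
  have "prob {\<omega> \<in> space \<Omega>. (\<Sum>i<n. Z i \<omega>) \<le> c * real n}
      \<le> prob {\<omega> \<in> space \<Omega>. (\<Sum>i<n. clip M (Z i \<omega>)) \<le> c * real n}"
  proof (rule finite_measure_mono_AE)
    show "AE \<omega> in \<Omega>. \<omega> \<in> {\<omega> \<in> space \<Omega>. (\<Sum>i<n. Z i \<omega>) \<le> c * real n}
        \<longrightarrow> \<omega> \<in> {\<omega> \<in> space \<Omega>. (\<Sum>i<n. clip M (Z i \<omega>)) \<le> c * real n}"
      using Z_nonneg
    proof eventually_elim
      case (elim \<omega>)
      then have "(\<Sum>i<n. clip M (Z i \<omega>)) \<le> (\<Sum>i<n. Z i \<omega>)"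
        by (intro sum_mono) (simp add: clip_le_self)
      then show ?case by auto
    qed
  qed measurable
  also have "\<dots> \<le> exp (-2 * real n * \<delta>^2 / M^2)"
    using prob_sum_clip_le_exp[OF \<Omega> indep distr_Z _ M mean \<delta>] False by simp
  finally have "prob {\<omega> \<in> space \<Omega>. (\<Sum>i<n. Z i \<omega>) \<le> c * real n} \<le> exp (-2 * real n * \<delta>^2 / M^2)" .
  moreover have "prob {\<omega> \<in> space \<Omega>. c * real n < (\<Sum>i<n. Z i \<omega>)}
      = 1 - prob {\<omega> \<in> space \<Omega>. (\<Sum>i<n. Z i \<omega>) \<le> c * real n}"
    by (subst prob_compl[symmetric]) (auto intro: arg_cong[where f = prob])
  ultimately show ?thesis by simp
qed

lemma diagonal_index_sequence:
  fixes N :: "nat \<Rightarrow> nat"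
  shows "\<exists>g :: nat \<Rightarrow> nat. filterlim g at_top sequentially \<and> (\<forall>\<^sub>F n in sequentially. N (g n) \<le> n)"
proof -
  define S where "S n = {k. k \<le> n \<and> (\<forall>j\<le>k. N j \<le> n)}" for n
  define g where "g n = Max (S n)" for n
  have in_S: "K \<le> g n \<and> g n \<in> S n" if "max K (Max (N ` {..K})) \<le> n" for K n
  proof -
    have "K \<in> S n"
      using that by (auto simp: S_def intro: order_trans[OF Max_ge])
    moreover have "finite (S n)"
      by (rule finite_subset[of _ "{..n}"]) (auto simp: S_def)
    ultimately show ?thesis
      unfolding g_def using Max_in Max_ge by blast
  qed
  have "filterlim g at_top sequentially"
    unfolding filterlim_at_top eventually_sequentially using in_S by blast
  moreover have "\<forall>\<^sub>F n in sequentially. N (g n) \<le> n"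
    unfolding eventually_sequentially using in_S[of 0] by (auto simp: S_def)
  ultimately show ?thesis by blast
qed

lemma diagonal_tendsto_1:
  fixes p :: "real \<Rightarrow> nat \<Rightarrow> real"
  assumes lim: "\<And>c. p c \<longlonglongrightarrow> 1" and le_1: "\<And>c n. p c n \<le> 1"
  shows "\<exists>\<phi>. (\<forall>n. \<phi> n > 0) \<and> filterlim \<phi> at_top sequentially \<and> (\<lambda>n. p (\<phi> n) n) \<longlonglongrightarrow> 1"
proof -
  have "\<forall>\<^sub>F n in sequentially. 1 - 1 / (real k + 1) < p (real k + 1) n" for k
    using lim[of "real k + 1"] by (rule order_tendstoD) simp
  then have "\<forall>k. \<exists>N. \<forall>n\<ge>N. 1 - 1 / (real k + 1) < p (real k + 1) n"
    by (simp add: eventually_sequentially)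
  then obtain N where N: "\<And>k n. N k \<le> n \<Longrightarrow> 1 - 1 / (real k + 1) < p (real k + 1) n"
    by metis
  obtain g where g: "filterlim g at_top sequentially" and g_N: "\<forall>\<^sub>F n in sequentially. N (g n) \<le> n"
    using diagonal_index_sequence by blast
  \<comment> \<open>At time \<open>n\<close> the level \<open>g n + 1\<close> is already within \<open>1 / (g n + 1)\<close> of its limit.\<close>
  define \<phi> where "\<phi> n = real (g n) + 1" for n
  have \<phi>: "filterlim \<phi> at_top sequentially"
    unfolding \<phi>_def add.commute[of _ 1]
    by (intro filterlim_tendsto_add_at_top[OF tendsto_const[of 1]]
          filterlim_compose[OF filterlim_real_sequentially g])
  have "(\<lambda>n. 1 - 1 / \<phi> n) \<longlonglongrightarrow> 1 - 0"
    by (intro tendsto_diff tendsto_const tendsto_divide_0[OF tendsto_const]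
          filterlim_at_top_imp_at_infinity[OF \<phi>])
  then have lower_lim: "(\<lambda>n. 1 - 1 / \<phi> n) \<longlonglongrightarrow> 1"
    by simp
  have lower: "\<forall>\<^sub>F n in sequentially. 1 - 1 / \<phi> n \<le> p (\<phi> n) n"
    using g_N by eventually_elim (use N in \<open>force simp: \<phi>_def\<close>)
  have "(\<lambda>n. p (\<phi> n) n) \<longlonglongrightarrow> 1"
    by (rule tendsto_sandwich[OF lower _ lower_lim tendsto_const]) (simp add: le_1)
  moreover have "\<phi> n > 0" for n
    by (simp add: \<phi>_def)
  ultimately show ?thesis
    using \<phi> by blast
qed

lemma prob_sum_gt_linear_tendsto_1:
  fixes D :: "nat \<Rightarrow> real measure" and L :: "real measure"
    and \<Omega> :: "nat \<Rightarrow> 'a measure" and Z :: "nat \<Rightarrow> nat \<Rightarrow> 'a \<Rightarrow> real"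
  assumes D: "\<And>n. real_distribution (D n)" and L: "real_distribution L"
    and conv: "weak_conv_m D L"
    and D_nonneg: "\<And>n. AE x in D n. 0 \<le> x"
    and infinite_mean: "(\<integral>\<^sup>+ x. ennreal x \<partial>L) = \<infinity>"
    and \<Omega>: "\<And>n. prob_space (\<Omega> n)"
    and indep: "\<And>n. prob_space.indep_vars (\<Omega> n) (\<lambda>_. borel) (Z n) {..<n}"
    and distr_Z: "\<And>n i. i < n \<Longrightarrow> distr (\<Omega> n) borel (Z n i) = D n"
  shows "(\<lambda>n. measure (\<Omega> n) {\<omega> \<in> space (\<Omega> n). c * real n < (\<Sum>i<n. Z n i \<omega>)}) \<longlonglongrightarrow> 1"
proof -
  interpret L: real_distribution L by fact
  obtain M where M: "M > 0" and c_lt: "c < (\<integral>x. clip M x \<partial>L)"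
    using integral_clip_unbounded[OF _ L.events_eq_borel infinite_mean] L.finite_measure_axioms
    by blast
  define \<delta> where "\<delta> = ((\<integral>x. clip M x \<partial>L) - c) / 2"
  have \<delta>: "\<delta> > 0" "c + \<delta> < (\<integral>x. clip M x \<partial>L)"
    using c_lt by (simp_all add: \<delta>_def field_simps)
  have mean_lim: "(\<lambda>n. \<integral>x. clip M x \<partial>D n) \<longlonglongrightarrow> (\<integral>x. clip M x \<partial>L)"
    using M by (intro weak_conv_imp_integral_bdd_continuous_conv[OF D L conv isCont_clip, where B = M])
      (simp add: clip_nonneg clip_le)
  have mean: "\<forall>\<^sub>F n in sequentially. c + \<delta> \<le> (\<integral>x. clip M x \<partial>D n)"
    using order_tendstoD(1)[OF mean_lim \<delta>(2)] by (rule eventually_mono) simp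
  define p where "p n = measure (\<Omega> n) {\<omega> \<in> space (\<Omega> n). c * real n < (\<Sum>i<n. Z n i \<omega>)}" for n
  have lower: "\<forall>\<^sub>F n in sequentially. 1 - exp (-2 * real n * \<delta>^2 / M^2) \<le> p n"
    using mean unfolding p_def
    by eventually_elim (rule prob_sum_gt_linear_ge[OF \<Omega> indep distr_Z D_nonneg M _ less_imp_le[OF \<delta>(1)]])
  have "(\<lambda>n. 1 - exp (-2 * real n * \<delta>^2 / M^2)) \<longlonglongrightarrow> 1"
    using \<delta>(1) M by real_asymp
  moreover have "p n \<le> 1" for n
    unfolding p_def by (rule prob_space.prob_le_1[OF \<Omega>])
  ultimately show ?thesis
    unfolding p_def[symmetric]
    by (intro tendsto_sandwich[OF lower _ _ tendsto_const]) auto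
qed

theorem lemma1:
  fixes P :: "nat \<Rightarrow> 'a measure" and X :: "nat \<Rightarrow> 'a \<Rightarrow> real"
    and Q :: "'b measure" and Y :: "'b \<Rightarrow> real"
    and \<Omega> :: "nat \<Rightarrow> 'c measure" and Z :: "nat \<Rightarrow> nat \<Rightarrow> 'c \<Rightarrow> real"
  assumes P: "\<And>n. prob_space (P n)"
    and X_meas: "\<And>n. X n \<in> borel_measurable (P n)"
    and X_nonneg: "\<And>n. \<forall>\<omega>\<in>space (P n). X n \<omega> \<ge> 0"
    and Q: "prob_space Q"
    and Y_meas: "Y \<in> borel_measurable Q"
    and conv: "weak_conv_m (\<lambda>n. distr (P n) borel (X n)) (distr Q borel Y)"
    and EY: "(\<integral>\<^sup>+ \<omega>. ennreal (Y \<omega>) \<partial>Q) = \<infinity>"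
    and \<Omega>: "\<And>n. prob_space (\<Omega> n)"
    and indep: "\<And>n. prob_space.indep_vars (\<Omega> n) (\<lambda>_. borel) (Z n) {..<n}"
    and ident: "\<And>n i. i < n \<Longrightarrow> distr (\<Omega> n) borel (Z n i) = distr (P n) borel (X n)"
  shows "\<exists>\<phi> :: nat \<Rightarrow> real. (\<forall>n. \<phi> n > 0) \<and> filterlim \<phi> at_top sequentially \<and>
     (\<lambda>n. measure (\<Omega> n) {\<omega> \<in> space (\<Omega> n). (\<Sum>i<n. Z n i \<omega>) > \<phi> n * real n})
       \<longlonglongrightarrow> 1"
proof (rule diagonal_tendsto_1)
  have D: "real_distribution (distr (P n) borel (X n))" for n
    using prob_space.real_distribution_distr[OF P X_meas] by simp
  have L: "real_distribution (distr Q borel Y)"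
    using prob_space.real_distribution_distr[OF Q Y_meas] by simp
  have D_nonneg: "AE x in distr (P n) borel (X n). 0 \<le> x" for n
    using X_nonneg[of n] X_meas[of n] by (subst AE_distr_iff) auto
  have "(\<integral>\<^sup>+ x. ennreal x \<partial>distr Q borel Y) = \<infinity>"
    using EY Y_meas by (simp add: nn_integral_distr)
  then show "(\<lambda>n. measure (\<Omega> n) {\<omega> \<in> space (\<Omega> n). (\<Sum>i<n. Z n i \<omega>) > c * real n}) \<longlonglongrightarrow> 1" for c
    using prob_sum_gt_linear_tendsto_1[OF D L conv D_nonneg _ \<Omega> indep ident] by simp
  show "measure (\<Omega> n) {\<omega> \<in> space (\<Omega> n). (\<Sum>i<n. Z n i \<omega>) > c * real n} \<le> 1" for c n
    by (rule prob_space.prob_le_1[OF \<Omega>])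
qed

end
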